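(* Let $n>1$ be an integer and let $k$ be an odd positive integer with $k<2^n$. Then there exist signs $\epsilon_1,\dots,\epsilon_{n-2}\in\{+1,-1\}$ (depending on $k$) such that $$\sin\Big(\frac{k\pi}{2^n}\Big)=\frac12\sqrt{2+\epsilon_1\sqrt{2+\epsilon_2\sqrt{2+\cdots+\epsilon_{n-2}\sqrt{2}}}},$$ where the square root sign appears $n-1$ times in total (for $n=2$ the right-hand side is $\frac12\sqrt2$). *)

theory Defs
  imports Complex_Main
begin

fun nested_rad :: "(nat \<Rightarrow> real) \<Rightarrow> nat \<Rightarrow> nat \<Rightarrow> real" where
  "nested_rad e i 0 = sqrt 2"
| "nested_rad e i (Suc m) = sqrt (2 + e i * nested_rad e (Suc i) m)"

end

theory Submission
  imports Defs
begin

text \<open>Since \<open>\<bar>2 sin x\<bar> = sqrt (2 - 2 cos 2x)\<close>, one square root is peeled off by halving the angle.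
  For odd \<open>k\<close>, \<open>-cos (k\<pi>/2^(m+2)) = sin ((k - 2^(m+1))\<pi>/2^(m+2))\<close> and \<open>k - 2^(m+1)\<close> is odd
  again, so by induction on \<open>m\<close> the number \<open>\<bar>2 sin (k\<pi>/2^(m+2))\<bar>\<close> is a nested radical with \<open>m\<close>
  signs for every odd integer \<open>k\<close>, starting from \<open>\<bar>2 sin (k\<pi>/4)\<bar> = sqrt 2\<close>. Allowing all odd
  integers and taking absolute values avoids any case analysis on the quadrant of the angle; for
  \<open>0 < k < 2^n\<close> the sine is positive anyway.\<close>

lemma nested_rad_fun_upd:
  "j < i \<Longrightarrow> nested_rad (e(j := v)) i m = nested_rad e i m"
  by (induction m arbitrary: i) auto

lemma abs_two_sin_eq_sqrt: "\<bar>2 * sin x\<bar> = sqrt (2 - 2 * cos (2 * x))"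
proof -
  have "2 - 2 * cos (2 * x) = (2 * sin x)\<^sup>2"
    by (simp add: cos_double_sin power_mult_distrib)
  then show ?thesis
    by (simp only: real_sqrt_abs)
qed

lemma minus_cos_eq_sin_diff_pi_half: "- cos x = sin (x - pi / 2)"
  by (simp add: sin_diff)

lemma eq_sign_mult_abs:
  fixes y :: real
  obtains s where "s = 1 \<or> s = -1" and "y = s * \<bar>y\<bar>"
  by (cases "y \<ge> 0") (auto intro: that)

lemma abs_two_sin_odd_eq_nested_rad:
  fixes k :: int
  assumes "odd k"
  shows "\<exists>e :: nat \<Rightarrow> real. (\<forall>j\<in>{i..<i+m}. e j = 1 \<or> e j = -1) \<and>
           \<bar>2 * sin (of_int k * pi / 2 ^ (m + 2))\<bar> = nested_rad e i m"
  using assms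
proof (induction m arbitrary: i k)
  case 0
  have "2 * (of_int k * pi / 2 ^ 2) = of_int k * (pi / 2)"
    by simp
  then have "cos (2 * (of_int k * pi / 2 ^ 2)) = 0"
    unfolding cos_zero_iff_int using "0" by auto
  then have "\<bar>2 * sin (of_int k * pi / 2 ^ 2)\<bar> = sqrt 2"
    by (simp only: abs_two_sin_eq_sqrt mult_zero_right diff_zero)
  then show ?case by simp
next
  case (Suc m)
  define \<theta> where "\<theta> = of_int k * pi / 2 ^ (m + 2)"
  define k' where "k' = k - 2 ^ (m + 1)"
  have "odd k'"
    using Suc.prems by (simp add: k'_def)
  then obtain e where e: "\<forall>j\<in>{Suc i..<Suc i+m}. e j = 1 \<or> e j = -1"
    and rad: "\<bar>2 * sin (of_int k' * pi / 2 ^ (m + 2))\<bar> = nested_rad e (Suc i) m"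
    using Suc.IH[where i = "Suc i" and k = k'] by blast
  obtain s where s: "s = 1 \<or> s = -1"
    and sign: "2 * sin (of_int k' * pi / 2 ^ (m + 2)) = s * \<bar>2 * sin (of_int k' * pi / 2 ^ (m + 2))\<bar>"
    by (rule eq_sign_mult_abs)
  have "- cos \<theta> = sin (of_int k' * pi / 2 ^ (m + 2))"
    unfolding minus_cos_eq_sin_diff_pi_half \<theta>_def k'_def
    by (simp add: field_simps)
  then have cos_\<theta>: "- 2 * cos \<theta> = s * nested_rad e (Suc i) m"
    using sign rad by simp
  have signs: "\<forall>j\<in>{i..<i + Suc m}. (e(i := s)) j = 1 \<or> (e(i := s)) j = -1"
    using e s by auto
  have "2 * (of_int k * pi / 2 ^ (Suc m + 2)) = \<theta>"
    by (simp add: \<theta>_def)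
  then have "\<bar>2 * sin (of_int k * pi / 2 ^ (Suc m + 2))\<bar> = sqrt (2 - 2 * cos \<theta>)"
    by (simp only: abs_two_sin_eq_sqrt)
  also have "\<dots> = nested_rad (e(i := s)) i (Suc m)"
    using cos_\<theta> by (simp add: nested_rad_fun_upd)
  finally show ?case
    using signs by blast
qed

theorem lemma3p3:
  fixes n k :: nat
  assumes "n > 1" and "odd k" and "k > 0" and "k < 2 ^ n"
  shows "\<exists>e :: nat \<Rightarrow> real. (\<forall>i\<in>{1..n-2}. e i = 1 \<or> e i = -1) \<and>
           sin (real k * pi / 2 ^ n) = 1/2 * nested_rad e 1 (n - 2)"
proof -
  have n: "n - 2 + 2 = n"
    using assms(1) by simp
  obtain e where e: "\<forall>j\<in>{1..<1 + (n-2)}. e j = 1 \<or> e j = -1"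
    and rad: "\<bar>2 * sin (real k * pi / 2 ^ n)\<bar> = nested_rad e 1 (n - 2)"
    using abs_two_sin_odd_eq_nested_rad[of "int k" 1 "n - 2", unfolded n] assms(2) by auto
  have "real k < 2 ^ n"
    using assms(4) by (metis of_nat_less_iff of_nat_numeral of_nat_power)
  then have "sin (real k * pi / 2 ^ n) > 0"
    using assms(3) by (intro sin_gt_zero) (simp_all add: divide_less_eq)
  then have "sin (real k * pi / 2 ^ n) = 1/2 * nested_rad e 1 (n - 2)"
    using rad by simp
  moreover have "{1..n-2} = {1..<1 + (n-2)}"
    by auto
  ultimately show ?thesis
    using e by auto
qed

end
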